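(* Let $q$ be a prime power with $q\equiv \pm1\pmod 5$, let $b\in\mathbb{F}_q$ be a root of $x^2+x-1$, let $\alpha\in\mathbb{F}_{q^5}$ be normal over $\mathbb{F}_q$, and let $f=x^2-bx+1$. Then $L_f(\alpha)+a$ is $2$-normal over $\mathbb{F}_q$ for every $a\in\mathbb{F}_q$ with the exception of at most one value of $a$.
   Context: For $h(x)=\sum_i a_ix^i\in\mathbb{F}_q[x]$, $L_h(\alpha)=\sum_i a_i\alpha^{q^i}$ for $\alpha\in\mathbb{F}_{q^5}$. An element $\alpha\in\mathbb{F}_{q^n}$ is normal over $\mathbb{F}_q$ if $\alpha,\alpha^q,\dots,\alpha^{q^{n-1}}$ form an $\mathbb{F}_q$-basis of $\mathbb{F}_{q^n}$. For $\alpha\in\mathbb{F}_{q^n}$ let $g_\alpha(x)=\sum_{i=0}^{n-1}\alpha^{q^i}x^{n-1-i}$; $\alpha$ is $k$-normal over $\mathbb{F}_q$ if $\gcd(x^n-1,g_\alpha(x))$ in $\mathbb{F}_{q^n}[x]$ has degree $k$ (here $n=5$). *)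

theory Defs
  imports "HOL-Computational_Algebra.Computational_Algebra"
begin

text \<open>Ambient field F_{q^n} is a finite field type 'a; the subfield F_q is the
set of fixed points of x \<mapsto> x^q.\<close>

definition subfield_Fq :: "nat \<Rightarrow> 'a::{field_gcd,finite} set" where
  "subfield_Fq q = {x. x ^ q = x}"

definition L_poly :: "nat \<Rightarrow> 'a::{field_gcd,finite} poly \<Rightarrow> 'a \<Rightarrow> 'a" where
  "L_poly q h \<alpha> = (\<Sum>i\<le>degree h. coeff h i * \<alpha> ^ (q ^ i))"

definition normal_elem :: "nat \<Rightarrow> nat \<Rightarrow> 'a::{field_gcd,finite} \<Rightarrow> bool" where
  "normal_elem q n \<alpha> \<longleftrightarrow>
     (\<forall>c. (\<forall>i<n. c i \<in> subfield_Fq q) \<and> (\<Sum>i<n. c i * \<alpha> ^ (q ^ i)) = 0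
          \<longrightarrow> (\<forall>i<n. c i = 0)) \<and>
     (\<forall>y. \<exists>c. (\<forall>i<n. c i \<in> subfield_Fq q) \<and> y = (\<Sum>i<n. c i * \<alpha> ^ (q ^ i)))"

definition g_poly :: "nat \<Rightarrow> nat \<Rightarrow> 'a::{field_gcd,finite} \<Rightarrow> 'a poly" where
  "g_poly q n \<alpha> = (\<Sum>i<n. monom (\<alpha> ^ (q ^ i)) (n - 1 - i))"

definition k_normal :: "nat \<Rightarrow> nat \<Rightarrow> nat \<Rightarrow> 'a::{field_gcd,finite} \<Rightarrow> bool" where
  "k_normal q n k \<alpha> \<longleftrightarrow>
     degree (gcd (monom 1 n - 1 :: 'a poly) (g_poly q n \<alpha>)) = k"

end

theory Submission
  imports Defs
begin

(*
  For x in F_{q^n}, L_u(x) corresponds to u * g_x modulo X^n - 1 (multiplying g_x by X is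
  the same as raising x to the q-th power).  Hence the F_q-polynomials u with L_u(x) = 0 are
  exactly the multiples of (X^n - 1) / gcd (X^n - 1, g_x), and x is k-normal iff this
  F_q-order of x has degree n - k.  For a normal element alpha the F_q-order of L_w(alpha)
  is (X^n - 1) / gcd (X^n - 1, w).

  Let f g = 1 + X + ... + X^(n-1) and write a = c Tr(alpha), which is possible because
  Tr(alpha) is a nonzero element of F_q.  Then L_f(alpha) + a = L_w(alpha) with
  w = f (1 + c g), and 1 + c g is coprime to (X - 1) g = (X^n - 1) / f unless
  1 + c g(1) = 0.  So L_f(alpha) + a is (deg f)-normal for all a but at most one.
  For n = 5 the hypothesis on b says exactly that x^2 - b x + 1 divides 1 + x + ... + x^4.
*)

text \<open>The library's \<open>finite_field_power_card_eq_same\<close> is stated for the type class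
  \<open>finite_field\<close>, which the types here are not known to belong to.\<close>

lemma power_card_UNIV_eq_self:
  fixes x :: "'a::{field,finite}"
  shows "x ^ card (UNIV :: 'a set) = x"
proof (cases "x = 0")
  case True
  then show ?thesis
    using finite_UNIV_card_ge_0[where ?'a = 'a] by simp
next
  case False
  define U where "U = UNIV - {0 :: 'a}"
  have "(\<Prod>y\<in>U. x * y) = (\<Prod>y\<in>U. y)"
    by (rule prod.reindex_bij_witness[of _ "\<lambda>y. y / x" "\<lambda>y. x * y"])
       (use False in \<open>auto simp: U_def\<close>)
  moreover have "(\<Prod>y\<in>U. y) \<noteq> 0"
    by (simp add: U_def)
  ultimately have "x ^ card U = 1"
    by (simp add: prod.distrib)
  moreover have "card (UNIV :: 'a set) = Suc (card U)"
    using finite_UNIV_card_ge_0[where ?'a = 'a] by (simp add: U_def card_Diff_singleton)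
  ultimately show ?thesis
    by simp
qed

lemma CHAR_eq_if_card_UNIV_eq_prime_power:
  fixes p k :: nat
  assumes "prime p" and "card (UNIV :: 'a::{field,finite} set) = p ^ k"
  shows "CHAR('a) = p"
proof -
  have "(\<Sum>x\<in>UNIV. x + 1) = (\<Sum>x\<in>UNIV. x :: 'a)"
    by (rule sum.reindex_bij_witness[of _ "\<lambda>y. y - 1" "\<lambda>y. y + 1"]) auto
  then have "of_nat (card (UNIV :: 'a set)) = (0 :: 'a)"
    by (simp add: sum.distrib)
  then have "CHAR('a) dvd p ^ k"
    using assms(2) of_nat_eq_0_iff_char_dvd by metis
  moreover have "prime CHAR('a)"
    using prime_CHAR_semidom finite_imp_CHAR_pos[where ?'a = 'a] by auto
  ultimately show ?thesis
    using assms(1) prime_dvd_power primes_dvd_imp_eq by blast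
qed

lemma coprime_linear_poly_if_not_root:
  fixes p :: "'a::field_gcd poly"
  assumes "poly p a \<noteq> 0"
  shows "coprime [:-a, 1:] p"
  using assms
  by (intro prime_elem_imp_coprime prime_elem_linear_field_poly) (simp_all add: poly_eq_0_iff_dvd)

lemma dvd_mult_iff_div_gcd_dvd:
  fixes a b c :: "'a::ring_gcd"
  assumes "a \<noteq> 0"
  shows "a dvd c * b \<longleftrightarrow> a div gcd a b dvd c"
proof -
  define d where "d = gcd a b"
  have "d \<noteq> 0"
    using assms by (simp add: d_def)
  have "a dvd c * b \<longleftrightarrow> d * (a div d) dvd d * (c * (b div d))"
    by (simp add: d_def ac_simps)
  also have "\<dots> \<longleftrightarrow> a div d dvd c * (b div d)"
    using \<open>d \<noteq> 0\<close> by simp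
  also have "\<dots> \<longleftrightarrow> a div d dvd c"
    using div_gcd_coprime[of a b] assms by (simp add: d_def coprime_dvd_mult_left_iff)
  finally show ?thesis
    by (simp add: d_def)
qed

lemma monic_poly_eq_if_dvd:
  fixes p r :: "'a::field poly"
  assumes "lead_coeff p = 1" and "lead_coeff r = 1" and "degree r = degree p" and "p dvd r"
  shows "r = p"
proof -
  obtain c where r: "r = p * c"
    using assms(4) by blast
  have "p \<noteq> 0" and "c \<noteq> 0"
    using assms(1,2) r by auto
  then have "degree c = 0"
    using assms(3) r by (simp add: degree_mult_eq)
  moreover have "lead_coeff c = 1"
    using assms(1,2) r by (simp add: lead_coeff_mult)
  ultimately have "c = 1"
    by (metis degree_0_id one_pCons)
  then show ?thesis
    using r by simp
qed

lemma monom_minus_1_eq_linear_mult_sum_monom: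
  "(monom 1 n - 1 :: 'a::comm_ring_1 poly) = [:-1, 1:] * (\<Sum>i<n. monom 1 i)"
proof -
  have "monom 1 1 - 1 = ([:-1, 1:] :: 'a poly)"
    by (simp add: monom_Suc one_pCons)
  then show ?thesis
    using power_diff_1_eq[of "monom 1 1 :: 'a poly" n] by (simp add: monom_power)
qed

lemma coeff_g_poly:
  "coeff (g_poly q n x) j = (if j < n then x ^ q ^ (n - 1 - j) else 0)"
proof -
  have "coeff (g_poly q n x) j = (\<Sum>i<n. if i = n - 1 - j \<and> j < n then x ^ q ^ i else 0)"
    unfolding g_poly_def coeff_sum coeff_monom by (intro sum.cong) auto
  then show ?thesis
    by (simp add: sum.If_cases)
qed

lemma L_poly_eq_sum_lessThan:
  assumes "degree u < N"
  shows "L_poly q u x = (\<Sum>i<N. coeff u i * x ^ q ^ i)"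
  unfolding L_poly_def using assms
  by (intro sum.mono_neutral_left) (auto simp: coeff_eq_0)

lemma degree_monom_minus_1:
  assumes "n > 0"
  shows "degree (monom 1 n - 1 :: 'a::comm_ring_1 poly) = n"
  using degree_add_eq_left[of "- 1" "monom 1 n :: 'a poly"] assms by (simp add: degree_monom_eq)

lemma monom_minus_1_neq_0:
  assumes "n > 0"
  shows "(monom 1 n - 1 :: 'a::comm_ring_1 poly) \<noteq> 0"
  using degree_monom_minus_1[OF assms, where ?'a = 'a] assms by auto

lemma coprime_monom_minus_1_X:
  assumes "n > 0"
  shows "coprime (monom 1 n - 1 :: 'a::field_gcd poly) [:0, 1:]"
  using coprime_linear_poly_if_not_root[of "monom 1 n - 1" 0] assms
  by (simp add: poly_monom zero_power coprime_commute)

lemma degree_g_poly_less: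
  assumes "n > 0"
  shows "degree (g_poly q n x) < n"
proof -
  have "degree (g_poly q n x) \<le> n - 1"
    by (rule degree_le) (auto simp: coeff_g_poly)
  with assms show ?thesis
    by simp
qed

lemma sum_monom_neq_0:
  assumes "n > 0"
  shows "(\<Sum>i<n. monom 1 i :: 'a::comm_ring_1 poly) \<noteq> 0"
  using monom_minus_1_eq_linear_mult_sum_monom[of n, where ?'a = 'a] monom_minus_1_neq_0[OF assms, where ?'a = 'a]
  by auto

lemma degree_sum_monom: "degree (\<Sum>i<n. monom 1 i :: 'a::idom poly) = n - 1"
proof (cases "n = 0")
  case False
  define \<Phi> :: "'a poly" where "\<Phi> = (\<Sum>i<n. monom 1 i)"
  have factor: "monom 1 n - 1 = [:-1, 1:] * \<Phi>"
    unfolding \<Phi>_def by (rule monom_minus_1_eq_linear_mult_sum_monom)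
  have "\<Phi> \<noteq> 0"
    unfolding \<Phi>_def using False by (intro sum_monom_neq_0) simp
  have "n = degree ([:-1, 1:] * \<Phi>)"
    using factor degree_monom_minus_1[of n, where ?'a = 'a] False by simp
  also have "\<dots> = 1 + degree \<Phi>"
    using \<open>\<Phi> \<noteq> 0\<close> by (subst degree_mult_eq) simp_all
  finally show ?thesis
    by (simp add: \<Phi>_def)
qed simp

lemma degree_linear_mult_cofactor:
  fixes f g :: "'a::idom poly"
  assumes "n > 0" and fg: "f * g = (\<Sum>i<n. monom 1 i)"
  shows "degree f + degree ([:-1, 1:] * g) = n"
proof -
  have "f \<noteq> 0" and "g \<noteq> 0"
    using fg sum_monom_neq_0[OF assms(1), where ?'a = 'a] by auto
  have "degree f + degree g = n - 1"
    using fg degree_sum_monom[of n, where ?'a = 'a] degree_mult_eq[OF \<open>f \<noteq> 0\<close> \<open>g \<noteq> 0\<close>] by simp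
  moreover have "degree ([:-1, 1:] * g) = 1 + degree g"
    using \<open>g \<noteq> 0\<close> by (subst degree_mult_eq) simp_all
  ultimately show ?thesis
    using assms(1) by arith
qed

lemma coprime_linear_mult_one_plus_smult:
  fixes g :: "'a::field_gcd poly"
  assumes "1 + c * poly g 1 \<noteq> 0"
  shows "coprime ([:-1, 1:] * g) (1 + smult c g)"
proof -
  have "coprime [:-1, 1:] (1 + smult c g)"
    using assms by (intro coprime_linear_poly_if_not_root) simp
  moreover have "coprime g (1 + smult c g)"
  proof (rule coprimeI)
    fix d
    assume "d dvd g" and "d dvd 1 + smult c g"
    then have "d dvd (1 + smult c g) - smult c g"
      by (intro dvd_diff) (simp_all add: dvd_smult)
    then show "is_unit d"
      by simp
  qed
  ultimately show ?thesis
    using coprime_mult_left_iff by blast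
qed

definition Fq_poly :: "nat \<Rightarrow> 'a::{field_gcd,finite} poly \<Rightarrow> bool" where
  "Fq_poly q u \<longleftrightarrow> (\<forall>i. coeff u i \<in> subfield_Fq q)"

definition frob_poly :: "nat \<Rightarrow> 'a::comm_semiring_1 poly \<Rightarrow> 'a poly" where
  "frob_poly q u = map_poly (\<lambda>c. c ^ q) u"

context
  fixes q :: nat
  assumes frob_add: "\<And>x y :: 'a::{field_gcd,finite}. (x + y) ^ q = x ^ q + y ^ q"
begin

lemma q_pos: "q > 0"
proof (rule ccontr)
  assume "\<not> q > 0"
  then have "(1 :: 'a) = 1 + 1"
    using frob_add[of 0 0] by simp
  then show False
    by (metis add_cancel_left_right one_neq_zero)
qed

lemma frob_minus: "(- x :: 'a) ^ q = - (x ^ q)"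
proof -
  have "x ^ q + (- x) ^ q = 0"
    using frob_add[of x "- x"] q_pos by (simp add: power_0_left)
  then show ?thesis
    by (simp add: eq_neg_iff_add_eq_0 add.commute)
qed

lemma frob_sum: "(\<Sum>i\<in>A. f i :: 'a) ^ q = (\<Sum>i\<in>A. f i ^ q)"
  by (induction A rule: infinite_finite_induct) (simp_all add: frob_add q_pos)

lemma frob_power_add: "(x + y :: 'a) ^ q ^ k = x ^ q ^ k + y ^ q ^ k"
  by (induction k arbitrary: x y) (simp_all add: power_mult frob_add)

lemma Fq_power_eq_self: "c \<in> subfield_Fq q \<Longrightarrow> (c :: 'a) ^ q ^ k = c"
  by (induction k) (simp_all add: subfield_Fq_def power_mult)

lemma zero_in_Fq: "(0 :: 'a) \<in> subfield_Fq q"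
  using q_pos by (simp add: subfield_Fq_def)

lemma uminus_in_Fq: "c \<in> subfield_Fq q \<Longrightarrow> (- c :: 'a) \<in> subfield_Fq q"
  by (simp add: subfield_Fq_def frob_minus)

lemma L_poly_0 [simp]: "L_poly q 0 (x :: 'a) = 0"
  by (simp add: L_poly_def)

lemma L_poly_pCons: "L_poly q (pCons c u) (x :: 'a) = c * x + L_poly q u (x ^ q)"
proof (cases "u = 0")
  case False
  have "L_poly q (pCons c u) x = (\<Sum>i\<le>Suc (degree u). coeff (pCons c u) i * x ^ q ^ i)"
    unfolding L_poly_def degree_pCons_eq[OF False] ..
  also have "\<dots> = c * x + (\<Sum>i\<le>degree u. coeff u i * (x ^ q) ^ q ^ i)"
    by (subst sum.atMost_Suc_shift) (simp add: power_mult)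
  finally show ?thesis
    by (simp add: L_poly_def)
qed (simp add: L_poly_def)

lemma L_poly_add: "L_poly q (u + v) (x :: 'a) = L_poly q u x + L_poly q v x"
proof (induction u arbitrary: v x)
  case (pCons c u)
  then show ?case
    by (cases v) (simp_all add: L_poly_pCons algebra_simps)
qed simp

lemma L_poly_smult: "L_poly q (smult c u) (x :: 'a) = c * L_poly q u x"
  by (induction u arbitrary: x) (simp_all add: L_poly_pCons algebra_simps)

lemma L_poly_diff: "L_poly q (u - v) (x :: 'a) = L_poly q u x - L_poly q v x"
  using L_poly_add[of "u - v" v x] by simp

lemma L_poly_monom: "L_poly q (monom c k) (x :: 'a) = c * x ^ q ^ k"
  by (induction k arbitrary: x) (simp_all add: monom_0 monom_Suc L_poly_pCons power_mult)

lemma L_poly_at_0 [simp]: "L_poly q u (0 :: 'a) = 0"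
  by (induction u) (simp_all add: L_poly_pCons q_pos zero_power)

lemma Fq_poly_pCons: "Fq_poly q (pCons c u) \<longleftrightarrow> c \<in> subfield_Fq q \<and> Fq_poly q (u :: 'a poly)"
  using zero_in_Fq by (auto simp: Fq_poly_def coeff_pCons split: nat.splits)

lemma Fq_poly_0 [simp]: "Fq_poly q (0 :: 'a poly)"
  using zero_in_Fq by (simp add: Fq_poly_def)

lemma L_poly_frob: "Fq_poly q u \<Longrightarrow> L_poly q u ((x :: 'a) ^ q) = L_poly q u x ^ q"
  by (induction u arbitrary: x)
     (simp_all add: L_poly_pCons Fq_poly_pCons frob_add power_mult_distrib subfield_Fq_def q_pos)

lemma L_poly_mult: "Fq_poly q v \<Longrightarrow> L_poly q (u * v) (x :: 'a) = L_poly q u (L_poly q v x)"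
  by (induction u arbitrary: x) (simp_all add: L_poly_add L_poly_smult L_poly_pCons L_poly_frob)

lemma coeff_frob_poly [simp]: "coeff (frob_poly q u) i = (coeff u i :: 'a) ^ q"
  using q_pos by (simp add: frob_poly_def coeff_map_poly)

lemma degree_frob_poly [simp]: "degree (frob_poly q (u :: 'a poly)) = degree u"
  using q_pos by (simp add: frob_poly_def degree_map_poly)

lemma frob_poly_add: "frob_poly q (u + v :: 'a poly) = frob_poly q u + frob_poly q v"
  by (rule poly_eqI) (simp add: frob_add)

lemma frob_poly_mult: "frob_poly q (u * v :: 'a poly) = frob_poly q u * frob_poly q v"
  by (rule poly_eqI) (simp add: coeff_mult frob_sum power_mult_distrib)

lemma frob_poly_dvd: "u dvd v \<Longrightarrow> frob_poly q u dvd frob_poly q (v :: 'a poly)"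
  by (auto simp: frob_poly_mult)

lemma Fq_poly_iff_frob_poly_eq: "Fq_poly q u \<longleftrightarrow> frob_poly q u = (u :: 'a poly)"
  by (auto simp: Fq_poly_def subfield_Fq_def poly_eq_iff)

lemma Fq_poly_add: "Fq_poly q u \<Longrightarrow> Fq_poly q v \<Longrightarrow> Fq_poly q (u + v :: 'a poly)"
  by (simp add: Fq_poly_iff_frob_poly_eq frob_poly_add)

lemma Fq_poly_mult: "Fq_poly q u \<Longrightarrow> Fq_poly q v \<Longrightarrow> Fq_poly q (u * v :: 'a poly)"
  by (simp add: Fq_poly_iff_frob_poly_eq frob_poly_mult)

lemma Fq_poly_smult: "c \<in> subfield_Fq q \<Longrightarrow> Fq_poly q u \<Longrightarrow> Fq_poly q (smult c u :: 'a poly)"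
  by (simp add: Fq_poly_def subfield_Fq_def power_mult_distrib)

lemma Fq_poly_div_mod:
  assumes "Fq_poly q u" and "Fq_poly q v"
  shows "Fq_poly q (u div v)" and "Fq_poly q (u mod v :: 'a poly)"
proof -
  have u: "u = u div v * v + u mod v"
    by simp
  then have frob_u: "u = frob_poly q (u div v) * v + frob_poly q (u mod v)"
    using assms by (metis Fq_poly_iff_frob_poly_eq frob_poly_add frob_poly_mult)
  then have "(frob_poly q (u mod v) + frob_poly q (u div v) * v) mod v = u mod v"
    by (metis add.commute)
  then have "frob_poly q (u mod v) mod v = u mod v"
    by simp
  moreover have "frob_poly q (u mod v) mod v = frob_poly q (u mod v)"
  proof (cases "v = 0 \<or> u mod v = 0")
    case False
    then show ?thesis
      using degree_mod_less[of v u] by (intro mod_poly_less) auto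
  qed (auto simp: frob_poly_def)
  ultimately show mod: "Fq_poly q (u mod v)"
    by (simp add: Fq_poly_iff_frob_poly_eq)
  show "Fq_poly q (u div v)"
  proof (cases "v = 0")
    case False
    have "frob_poly q (u div v) * v = u div v * v"
      using frob_u u mod by (metis Fq_poly_iff_frob_poly_eq add_right_cancel)
    then show ?thesis
      using False by (simp add: Fq_poly_iff_frob_poly_eq)
  qed simp
qed

lemma frob_poly_g_poly: "frob_poly q (g_poly q n x) = g_poly q n ((x :: 'a) ^ q)"
  by (rule poly_eqI)
     (auto simp: coeff_g_poly q_pos simp flip: power_mult intro: arg_cong[where f = "power x"])

lemma g_poly_add: "g_poly q n (x + y :: 'a) = g_poly q n x + g_poly q n y"
  by (rule poly_eqI) (simp add: coeff_g_poly frob_power_add)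

lemma g_poly_mult_Fq:
  "c \<in> subfield_Fq q \<Longrightarrow> g_poly q n (c * x :: 'a) = smult c (g_poly q n x)"
  by (rule poly_eqI) (simp add: coeff_g_poly power_mult_distrib Fq_power_eq_self)

lemma Fq_poly_sum_monom: "Fq_poly q (\<Sum>i<n. monom 1 i :: 'a poly)"
  using zero_in_Fq by (simp add: Fq_poly_def coeff_sum coeff_monom subfield_Fq_def)

context
  fixes n :: nat
  assumes n_pos: "n > 0"
    and frob_period: "\<And>x :: 'a. x ^ q ^ n = x"
begin

lemma Fq_poly_monom_minus_1: "Fq_poly q (monom 1 n - 1 :: 'a poly)"
  unfolding Fq_poly_iff_frob_poly_eq using n_pos
  by (intro poly_eqI) (simp add: coeff_monom frob_minus q_pos zero_power)

lemma L_poly_monom_minus_1 [simp]: "L_poly q (monom 1 n - 1) (x :: 'a) = 0"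
  using L_poly_monom[of 1 0 x] by (simp add: L_poly_diff L_poly_monom frob_period)

lemma g_poly_eq_0_iff: "g_poly q n x = 0 \<longleftrightarrow> (x :: 'a) = 0"
proof
  assume "g_poly q n x = 0"
  then have "coeff (g_poly q n x) (n - 1) = 0"
    by simp
  then show "x = 0"
    using n_pos by (simp add: coeff_g_poly)
qed (simp add: poly_eq_iff coeff_g_poly q_pos zero_power)

lemma g_poly_0 [simp]: "g_poly q n (0 :: 'a) = 0"
  by (simp add: g_poly_eq_0_iff)

lemma monom_minus_1_dvd_g_poly_iff: "(monom 1 n - 1) dvd g_poly q n x \<longleftrightarrow> (x :: 'a) = 0"
proof
  assume dvd: "(monom 1 n - 1) dvd g_poly q n x"
  show "x = 0"
  proof (rule ccontr)
    assume "x \<noteq> 0"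
    then have "degree (monom 1 n - 1 :: 'a poly) \<le> degree (g_poly q n x)"
      by (intro dvd_imp_degree_le[OF dvd]) (simp add: g_poly_eq_0_iff)
    then show False
      using degree_monom_minus_1[OF n_pos, where ?'a = 'a] degree_g_poly_less[OF n_pos, of q x] by linarith
  qed
qed simp

lemma pCons_0_g_poly:
  "pCons 0 (g_poly q n x) = g_poly q n (x ^ q) + smult (x :: 'a) (monom 1 n - 1)"
proof (rule poly_eqI)
  fix j
  have frob_iter: "(x ^ q) ^ q ^ k = x ^ q ^ Suc k" for k
    by (simp add: power_mult)
  show "coeff (pCons 0 (g_poly q n x)) j = coeff (g_poly q n (x ^ q) + smult x (monom 1 n - 1)) j"
  proof (cases j)
    case 0
    then show ?thesis
      using n_pos frob_iter[of "n - 1"] frob_period by (simp add: coeff_g_poly)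
  next
    case (Suc k)
    have "n - 1 - k = Suc (n - 1 - j)" if "j < n"
      using that Suc by simp
    then show ?thesis
      using Suc frob_iter by (auto simp: coeff_g_poly coeff_monom)
  qed
qed

lemma monom_minus_1_dvd_g_poly_L_poly:
  assumes "Fq_poly q u"
  shows "(monom 1 n - 1) dvd u * g_poly q n x - g_poly q n (L_poly q u (x :: 'a))"
  using assms
proof (induction u arbitrary: x)
  case 0
  then show ?case
    by simp
next
  case (pCons c u)
  then have c: "c \<in> subfield_Fq q" and u: "Fq_poly q u"
    by (simp_all add: Fq_poly_pCons)
  have "pCons c u * g_poly q n x - g_poly q n (L_poly q (pCons c u) x)
      = u * pCons 0 (g_poly q n x) - g_poly q n (L_poly q u (x ^ q))"
    using c by (simp add: L_poly_pCons g_poly_add g_poly_mult_Fq)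
  also have "\<dots> = (u * g_poly q n (x ^ q) - g_poly q n (L_poly q u (x ^ q)))
      + (monom 1 n - 1) * smult x u"
    by (simp add: pCons_0_g_poly algebra_simps smult_diff_right)
  finally show ?case
    using pCons.IH[OF u, of "x ^ q"] by (metis dvd_add dvd_triv_left)
qed

lemma L_poly_eq_0_iff_monom_minus_1_dvd:
  assumes "Fq_poly q u"
  shows "L_poly q u (x :: 'a) = 0 \<longleftrightarrow> (monom 1 n - 1) dvd u * g_poly q n x"
proof -
  have "(monom 1 n - 1) dvd u * g_poly q n x - g_poly q n (L_poly q u x)"
    using assms by (rule monom_minus_1_dvd_g_poly_L_poly)
  from dvd_add_right_iff[OF this, of "g_poly q n (L_poly q u x)"]
  show ?thesis
    by (simp add: monom_minus_1_dvd_g_poly_iff)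
qed

lemma monom_minus_1_dvd_frob_poly_mult_g_poly:
  assumes "(monom 1 n - 1) dvd v * g_poly q n x"
  shows "(monom 1 n - 1) dvd frob_poly q v * g_poly q n (x :: 'a)"
proof -
  define P :: "'a poly" where "P = monom 1 n - 1"
  have "P dvd frob_poly q v * g_poly q n (x ^ q)"
    using frob_poly_dvd[OF assms] Fq_poly_monom_minus_1
    by (simp add: frob_poly_mult frob_poly_g_poly Fq_poly_iff_frob_poly_eq P_def)
  moreover have "[:0, 1:] * (frob_poly q v * g_poly q n x)
      = frob_poly q v * g_poly q n (x ^ q) + P * smult x (frob_poly q v)"
    using pCons_0_g_poly[of x] by (simp add: P_def algebra_simps)
  ultimately have "P dvd [:0, 1:] * (frob_poly q v * g_poly q n x)"
    by (metis dvd_add dvd_triv_left)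
  with coprime_monom_minus_1_X[OF n_pos] show ?thesis
    unfolding P_def by (rule coprime_dvd_mult_right_iff[THEN iffD1])
qed

lemma Fq_annihilator:
  obtains m where "Fq_poly q m"
    and "\<And>u. Fq_poly q u \<Longrightarrow> L_poly q u x = 0 \<longleftrightarrow> m dvd u"
    and "degree (gcd (monom 1 n - 1) (g_poly q n (x :: 'a))) + degree m = n"
proof -
  define P :: "'a poly" where "P = monom 1 n - 1"
  define G where "G = g_poly q n x"
  define M where "M = P div gcd P G"
  \<comment> \<open>\<open>gcd\<close> is only normalized with respect to \<open>unit_factor\<close>, so \<open>M\<close> need not be monic.\<close>
  define m where "m = smult (inverse (lead_coeff M)) M"
  have "P \<noteq> 0"
    unfolding P_def using n_pos by (rule monom_minus_1_neq_0)
  have PM: "P = gcd P G * M"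
    by (simp add: M_def)
  then have "M \<noteq> 0"
    using \<open>P \<noteq> 0\<close> by auto
  then have m: "lead_coeff m = 1" "degree m = degree M"
    by (simp_all add: m_def)
  have dvd_iff: "P dvd v * G \<longleftrightarrow> m dvd v" for v
    using dvd_mult_iff_div_gcd_dvd[OF \<open>P \<noteq> 0\<close>] \<open>M \<noteq> 0\<close>
    by (simp add: m_def M_def smult_dvd_iff)
  have "P dvd frob_poly q m * G"
    using monom_minus_1_dvd_frob_poly_mult_g_poly dvd_iff[of m] by (simp add: P_def G_def)
  \<comment> \<open>\<open>m\<close> divides its Frobenius image, which is monic of the same degree.\<close>
  then have "frob_poly q m = m"
    using m dvd_iff by (intro monic_poly_eq_if_dvd) simp_all
  show ?thesis
  proof (rule that)
    show "Fq_poly q m"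
      using \<open>frob_poly q m = m\<close> by (simp add: Fq_poly_iff_frob_poly_eq)
    show "L_poly q u x = 0 \<longleftrightarrow> m dvd u" if "Fq_poly q u" for u
      using L_poly_eq_0_iff_monom_minus_1_dvd[OF that] dvd_iff by (simp add: P_def G_def)
    have "degree P = degree (gcd P G) + degree M"
      using PM \<open>P \<noteq> 0\<close> by (metis degree_mult_eq mult_zero_left mult_zero_right)
    then show "degree (gcd (monom 1 n - 1) (g_poly q n x)) + degree m = n"
      using degree_monom_minus_1[OF n_pos, where ?'a = 'a] m by (simp add: P_def G_def)
  qed
qed

lemma k_normal_if_annihilator:
  assumes "Fq_poly q h" and h: "\<And>u. Fq_poly q u \<Longrightarrow> L_poly q u x = 0 \<longleftrightarrow> h dvd u"
  shows "k_normal q n (n - degree h) (x :: 'a)"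
proof -
  obtain m where "Fq_poly q m" and m: "\<And>u. Fq_poly q u \<Longrightarrow> L_poly q u x = 0 \<longleftrightarrow> m dvd u"
    and deg: "degree (gcd (monom 1 n - 1) (g_poly q n x)) + degree m = n"
    using Fq_annihilator[of x] by blast
  have "h dvd m"
    using h[OF \<open>Fq_poly q m\<close>] m[OF \<open>Fq_poly q m\<close>] by simp
  moreover have "m dvd h"
    using h[OF assms(1)] m[OF assms(1)] by simp
  moreover have "h \<noteq> 0" and "m \<noteq> 0"
    using h[OF Fq_poly_monom_minus_1] m[OF Fq_poly_monom_minus_1] monom_minus_1_neq_0[OF n_pos, where ?'a = 'a] by auto
  ultimately have "degree h = degree m"
    by (simp add: dvd_imp_degree_le order_antisym)
  then show ?thesis
    using deg by (simp add: k_normal_def)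
qed

lemma normal_elem_L_poly_eq_0_iff:
  assumes "normal_elem q n \<alpha>" and "Fq_poly q w"
  shows "L_poly q w (\<alpha> :: 'a) = 0 \<longleftrightarrow> (monom 1 n - 1) dvd w"
proof
  define P :: "'a poly" where "P = monom 1 n - 1"
  have L_mult_P: "L_poly q (v * P) \<alpha> = 0" for v
    by (simp add: L_poly_mult Fq_poly_monom_minus_1 P_def)
  assume "L_poly q w \<alpha> = 0"
  define r where "r = w mod P"
  have "Fq_poly q r"
    unfolding r_def P_def using assms(2) Fq_poly_monom_minus_1 by (rule Fq_poly_div_mod)
  have "L_poly q r \<alpha> = 0"
    using \<open>L_poly q w \<alpha> = 0\<close> L_poly_add[of "w div P * P" r \<alpha>] L_mult_P by (simp add: r_def)
  have "degree r < n"
    using degree_mod_less[OF monom_minus_1_neq_0[OF n_pos], of w] degree_monom_minus_1[OF n_pos, where ?'a = 'a] n_pos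
    by (auto simp: r_def P_def)
  then have "(\<Sum>i<n. coeff r i * \<alpha> ^ q ^ i) = 0"
    using \<open>L_poly q r \<alpha> = 0\<close> by (simp add: L_poly_eq_sum_lessThan)
  then have "\<forall>i<n. coeff r i = 0"
    using assms(1) \<open>Fq_poly q r\<close> by (simp add: normal_elem_def Fq_poly_def)
  then have "r = 0"
    using \<open>degree r < n\<close> by (intro poly_eqI) (metis coeff_0 coeff_eq_0 leI order_less_le_trans)
  then show "(monom 1 n - 1) dvd w"
    by (simp add: r_def P_def mod_0_imp_dvd)
next
  assume "(monom 1 n - 1) dvd w"
  then obtain v where "w = v * (monom 1 n - 1)"
    by (metis dvdE mult.commute)
  then show "L_poly q w \<alpha> = 0"
    by (simp add: L_poly_mult Fq_poly_monom_minus_1)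
qed

lemma normal_elem_L_poly_L_poly_eq_0_iff:
  assumes "normal_elem q n \<alpha>" and "Fq_poly q w" and "Fq_poly q u"
  shows "L_poly q u (L_poly q w (\<alpha> :: 'a)) = 0 \<longleftrightarrow> (monom 1 n - 1) dvd u * w"
  using assms by (simp add: L_poly_mult[symmetric] normal_elem_L_poly_eq_0_iff Fq_poly_mult)

text \<open>\<open>L_poly q (\<Sum>i<n. monom 1 i) x\<close> is the trace of \<open>x\<close> over \<open>F_q\<close>.\<close>

lemma L_poly_sum_monom_in_Fq: "L_poly q (\<Sum>i<n. monom 1 i) (x :: 'a) \<in> subfield_Fq q"
proof -
  define \<Phi> :: "'a poly" where "\<Phi> = (\<Sum>i<n. monom 1 i)"
  have "pCons 0 \<Phi> = \<Phi> + (monom 1 n - 1)"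
    using monom_minus_1_eq_linear_mult_sum_monom[of n, where ?'a = 'a] by (simp add: \<Phi>_def)
  then have "L_poly q \<Phi> x ^ q = L_poly q \<Phi> x"
    using L_poly_frob[OF Fq_poly_sum_monom] L_poly_pCons[of 0 \<Phi> x] by (simp add: L_poly_add \<Phi>_def)
  then show ?thesis
    by (simp add: subfield_Fq_def \<Phi>_def)
qed

lemma L_poly_sum_monom_neq_0:
  assumes "normal_elem q n \<alpha>"
  shows "L_poly q (\<Sum>i<n. monom 1 i) (\<alpha> :: 'a) \<noteq> 0"
proof
  assume "L_poly q (\<Sum>i<n. monom 1 i) \<alpha> = 0"
  then have "(monom 1 n - 1) dvd (\<Sum>i<n. monom 1 i :: 'a poly)"
    using normal_elem_L_poly_eq_0_iff[OF assms Fq_poly_sum_monom] by simp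
  moreover have "(\<Sum>i<n. monom 1 i :: 'a poly) \<noteq> 0"
    using n_pos by (rule sum_monom_neq_0)
  ultimately have "n \<le> n - 1"
    using dvd_imp_degree_le degree_monom_minus_1[OF n_pos, where ?'a = 'a] degree_sum_monom[of n, where ?'a = 'a]
    by metis
  then show False
    using n_pos by simp
qed

lemma normal_elem_L_poly_mult_annihilator:
  assumes "normal_elem q n \<alpha>" and "Fq_poly q (f * e)" and "Fq_poly q u"
    and "monom 1 n - 1 = h * f" and "f \<noteq> 0" and "coprime h e"
  shows "L_poly q u (L_poly q (f * e) (\<alpha> :: 'a)) = 0 \<longleftrightarrow> h dvd u"
proof -
  have "L_poly q u (L_poly q (f * e) \<alpha>) = 0 \<longleftrightarrow> h * f dvd u * (f * e)"
    using normal_elem_L_poly_L_poly_eq_0_iff[OF assms(1-3)] assms(4) by simp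
  also have "\<dots> \<longleftrightarrow> h * f dvd (u * e) * f"
    by (simp only: ac_simps)
  also have "\<dots> \<longleftrightarrow> h dvd u"
    using assms(5,6) by (simp add: coprime_dvd_mult_left_iff)
  finally show ?thesis .
qed

lemma k_normal_L_poly_plus_const:
  assumes \<alpha>: "normal_elem q n \<alpha>" and f: "Fq_poly q f" and g: "Fq_poly q g"
    and fg: "f * g = (\<Sum>i<n. monom 1 i)" and a: "a \<in> subfield_Fq q"
    and nonroot: "L_poly q (\<Sum>i<n. monom 1 i) \<alpha> + a * poly g 1 \<noteq> 0"
  shows "k_normal q n (degree f) (L_poly q f \<alpha> + (a :: 'a))"
proof -
  define T where "T = L_poly q (\<Sum>i<n. monom 1 i) \<alpha>"
  define c where "c = a / T"
  define e where "e = 1 + smult c g"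
  define h where "h = [:-1, 1:] * g"
  have "T \<noteq> 0"
    unfolding T_def using \<alpha> by (rule L_poly_sum_monom_neq_0)
  have "c \<in> subfield_Fq q"
    using a L_poly_sum_monom_in_Fq by (simp add: c_def T_def subfield_Fq_def power_divide)
  have fe: "f * e = f + smult c (\<Sum>i<n. monom 1 i)"
    by (simp add: e_def fg[symmetric] algebra_simps)
  then have \<gamma>: "L_poly q f \<alpha> + a = L_poly q (f * e) \<alpha>"
    using \<open>T \<noteq> 0\<close> by (simp add: L_poly_add L_poly_smult c_def T_def)
  have "Fq_poly q (f * e)"
    unfolding fe using f \<open>c \<in> subfield_Fq q\<close> by (intro Fq_poly_add Fq_poly_smult Fq_poly_sum_monom)
  have "1 + c * poly g 1 \<noteq> 0"
    using nonroot \<open>T \<noteq> 0\<close> by (simp add: c_def T_def field_simps)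
  then have "coprime h e"
    unfolding h_def e_def by (rule coprime_linear_mult_one_plus_smult)
  have "f \<noteq> 0"
    using fg sum_monom_neq_0[OF n_pos, where ?'a = 'a] by auto
  have "monom 1 n - 1 = h * f"
    unfolding monom_minus_1_eq_linear_mult_sum_monom h_def fg[symmetric] by (simp only: ac_simps)
  then have annihilator: "L_poly q u (L_poly q (f * e) \<alpha>) = 0 \<longleftrightarrow> h dvd u" if "Fq_poly q u" for u
    using normal_elem_L_poly_mult_annihilator[OF \<alpha> \<open>Fq_poly q (f * e)\<close> that]
      \<open>f \<noteq> 0\<close> \<open>coprime h e\<close> by blast
  have "Fq_poly q h"
    unfolding h_def using g zero_in_Fq uminus_in_Fq[of 1]
    by (intro Fq_poly_mult) (simp_all add: Fq_poly_pCons subfield_Fq_def)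
  then have "k_normal q n (n - degree h) (L_poly q f \<alpha> + a)"
    unfolding \<gamma> using annihilator by (rule k_normal_if_annihilator)
  moreover have "n - degree h = degree f"
    using degree_linear_mult_cofactor[OF n_pos fg] unfolding h_def by arith
  ultimately show ?thesis
    by simp
qed

theorem card_not_k_normal_L_poly_plus_const_le_1:
  assumes \<alpha>: "normal_elem q n \<alpha>" and f: "Fq_poly q f" and "f dvd (\<Sum>i<n. monom 1 i)"
  shows "card {a \<in> subfield_Fq q. \<not> k_normal q n (degree f) (L_poly q f \<alpha> + (a :: 'a))} \<le> 1"
proof -
  define T where "T = L_poly q (\<Sum>i<n. monom 1 i) \<alpha>"
  obtain g where fg: "f * g = (\<Sum>i<n. monom 1 i)"
    using assms(3) by (metis dvdE)
  have "f \<noteq> 0"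
    using fg sum_monom_neq_0[OF n_pos, where ?'a = 'a] by auto
  then have "g = (\<Sum>i<n. monom 1 i) div f"
    using fg by (metis nonzero_mult_div_cancel_left)
  then have "Fq_poly q g"
    using Fq_poly_div_mod(1)[OF Fq_poly_sum_monom f] by simp
  then have "{a \<in> subfield_Fq q. \<not> k_normal q n (degree f) (L_poly q f \<alpha> + a)}
      \<subseteq> {a. T + a * poly g 1 = 0}"
    using k_normal_L_poly_plus_const[OF \<alpha> f _ fg] by (auto simp: T_def)
  also have "\<dots> \<subseteq> {- T / poly g 1}"
  proof
    fix a
    assume "a \<in> {a. T + a * poly g 1 = 0}"
    moreover have "T \<noteq> 0"
      unfolding T_def using \<alpha> by (rule L_poly_sum_monom_neq_0)
    ultimately have "poly g 1 \<noteq> 0" and "a * poly g 1 = - T"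
      by (auto simp: eq_neg_iff_add_eq_0 add.commute)
    then show "a \<in> {- T / poly g 1}"
      by (simp add: field_simps)
  qed
  finally have "card {a \<in> subfield_Fq q. \<not> k_normal q n (degree f) (L_poly q f \<alpha> + a)}
      \<le> card {- T / poly g 1}"
    by (rule card_mono[rotated]) simp
  then show ?thesis
    by simp
qed



end

end


theorem lemma6p14:
  fixes q :: nat and b \<alpha> :: "'a::{field_gcd,finite}"
  assumes "\<exists>p m. prime p \<and> m > 0 \<and> q = p ^ m"
    and "card (UNIV :: 'a set) = q ^ 5"
    and "q mod 5 = 1 \<or> q mod 5 = 4"
    and "b \<in> subfield_Fq q" and "b\<^sup>2 + b - 1 = 0"
    and "normal_elem q 5 \<alpha>"
  shows "card {a \<in> subfield_Fq q.
            \<not> k_normal q 5 2 (L_poly q [:1, - b, 1:] \<alpha> + a)} \<le> 1"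
proof -
  \<comment> \<open>The congruence on \<open>q\<close> only guarantees that \<open>b\<close> exists.\<close>
  obtain p m where p: "prime p" and q: "q = p ^ m"
    using assms(1) by blast
  have "CHAR('a) = p"
    using p by (intro CHAR_eq_if_card_UNIV_eq_prime_power[of p "m * 5"])
      (simp_all add: assms(2) q power_mult)
  then have frob_add: "(x + y) ^ q = x ^ q + y ^ q" for x y :: 'a
    using p q by (intro freshmans_dream') simp_all
  have period: "x ^ q ^ 5 = x" for x :: 'a
    using power_card_UNIV_eq_self[of x] assms(2) by simp
  have "[:1, - b, 1:] * [:1, 1 + b, 1:] = (\<Sum>i<5. monom 1 i :: 'a poly)"
    using assms(5) by (simp add: eval_nat_numeral monom_altdef one_pCons power2_eq_square algebra_simps)
  then have dvd: "[:1, - b, 1:] dvd (\<Sum>i<5. monom 1 i :: 'a poly)"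
    by (rule dvdI[OF sym])
  have "Fq_poly q [:1, - b, 1:]"
    using assms(4) zero_in_Fq[OF frob_add] uminus_in_Fq[OF frob_add]
    by (simp add: Fq_poly_pCons[OF frob_add] Fq_poly_0[OF frob_add] subfield_Fq_def)
  from card_not_k_normal_L_poly_plus_const_le_1[OF frob_add _ period assms(6) this dvd]
  show ?thesis
    by (simp add: numeral_2_eq_2)
qed

end
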